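(* Let $x_1,\dots,x_n\in\mathbb{R}^d\setminus\{0\}$, and fix $\beta>0$ and $b>0$. The function $g:\mathbb{P}_d\to\mathbb{R}_{++}$ defined by $g(\Sigma)=\sum_{i=1}^n\left(\frac{x_i^\top\Sigma^{-1}x_i}{b}\right)^{\beta}$ is Euclidean convex and geodesically convex on $\mathbb{P}_d$.
   Context: $\mathbb{P}_d$ denotes the set of real symmetric $d\times d$ positive definite matrices, equipped with the affine-invariant Riemannian metric $\langle U,V\rangle_X=\operatorname{tr}(X^{-1}UX^{-1}V)$, whose geodesic from $A$ to $B$ is $\gamma(t)=A^{1/2}(A^{-1/2}BA^{-1/2})^tA^{1/2}$, $t\in[0,1]$. Geodesically convex means $t\mapsto g(\gamma(t))$ is convex on $[0,1]$ for every such geodesic; Euclidean convex means convex in the usual sense on the convex set $\mathbb{P}_d$. *)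

theory Defs
  imports "HOL-Analysis.Analysis"
begin

definition spd :: "real^'d^'d \<Rightarrow> bool" where
  "spd A \<longleftrightarrow> transpose A = A \<and> (\<forall>v. v \<noteq> 0 \<longrightarrow> v \<bullet> (A *v v) > 0)"

definition PD :: "(real^'d^'d) set" where
  "PD = {A. spd A}"

definition diag_mat :: "('d \<Rightarrow> real) \<Rightarrow> real^'d^'d" where
  "diag_mat l = (\<chi> i j. if i = j then l i else 0)"

text \<open>Real power A^t of an SPD matrix via its spectral decomposition
  A = U diag(l) U^T (U orthogonal, l > 0): A^t = U diag(l^t) U^T.
  (Well defined since the decomposition exists and the result is independent of it.)\<close>
definition mpow :: "real^'d^'d \<Rightarrow> real \<Rightarrow> real^'d^'d" where
  "mpow A t = (SOME B. \<exists>U l. orthogonal_matrix U \<and> (\<forall>i. l i > 0) \<and>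
      A = U ** diag_mat l ** transpose U \<and>
      B = U ** diag_mat (\<lambda>i. l i powr t) ** transpose U)"

text \<open>Affine-invariant geodesic from A to B:
  gamma(t) = A^(1/2) (A^(-1/2) B A^(-1/2))^t A^(1/2).\<close>
definition geod :: "real^'d^'d \<Rightarrow> real^'d^'d \<Rightarrow> real \<Rightarrow> real^'d^'d" where
  "geod A B t = mpow A (1/2) ** mpow (mpow A (-1/2) ** B ** mpow A (-1/2)) t ** mpow A (1/2)"

definition geodesically_convex :: "(real^'d^'d \<Rightarrow> real) \<Rightarrow> bool" where
  "geodesically_convex g \<longleftrightarrow>
     (\<forall>A B. spd A \<longrightarrow> spd B \<longrightarrow> convex_on {0..1} (\<lambda>t. g (geod A B t)))"

end

theory Submission
  imports Defs
begin

text \<open>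
  Both claims reduce to log-convexity of each summand \<open>h(\<Sigma>) = x\<^sup>T \<Sigma>\<^sup>-\<^sup>1 x\<close>: a positive
  log-convex function stays convex under every positive power, by weighted AM-GM.
  In the Euclidean setting, Cauchy--Schwarz for the inner products given by positive definite
  matrices shows that \<open>1 / h\<close> is concave, which implies log-convexity. Along the geodesic from \<open>A\<close> to \<open>B\<close>,
  diagonalizing \<open>A\<^sup>-\<^sup>1\<^sup>/\<^sup>2 B A\<^sup>-\<^sup>1\<^sup>/\<^sup>2 = V diag(m) V\<^sup>T\<close> turns \<open>h(\<gamma>(t))\<close> into
  \<open>\<Sum>\<^sub>j c\<^sub>j m\<^sub>j\<^sup>-\<^sup>t\<close> with \<open>c\<^sub>j \<ge> 0\<close>, and sums of log-convex functions are log-convex by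
  Hoelder's inequality. The spectral theorem needed in both parts is proved by maximising the
  Rayleigh quotient on invariant subspaces.
\<close>

section \<open>Log-convex functions\<close>

text \<open>Convexity of \<open>ln \<circ> f\<close>, stated multiplicatively to avoid logarithms.\<close>
definition log_convex_on :: "'a::real_vector set \<Rightarrow> ('a \<Rightarrow> real) \<Rightarrow> bool" where
  "log_convex_on S f \<longleftrightarrow> convex S \<and> (\<forall>x\<in>S. 0 < f x) \<and>
    (\<forall>x\<in>S. \<forall>y\<in>S. \<forall>u\<ge>0. \<forall>v\<ge>0. u + v = 1 \<longrightarrow>
      f (u *\<^sub>R x + v *\<^sub>R y) \<le> f x powr u * f y powr v)"

lemma log_convex_on_powr:
  assumes f: "log_convex_on S f" and "\<beta> > 0"
  shows "convex_on S (\<lambda>x. f x powr \<beta>)"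
  unfolding convex_on_def
proof (intro conjI ballI allI impI)
  show "convex S" using f by (simp add: log_convex_on_def)
  fix x y and u v :: real
  assume xy: "x \<in> S" "y \<in> S" and uv: "0 \<le> u" "0 \<le> v" "u + v = 1"
  have pos: "f x > 0" "f y > 0" "f (u *\<^sub>R x + v *\<^sub>R y) > 0"
    using f xy uv unfolding log_convex_on_def convex_def by auto
  have "f (u *\<^sub>R x + v *\<^sub>R y) powr \<beta> \<le> (f x powr u * f y powr v) powr \<beta>"
    using f xy uv pos \<open>\<beta> > 0\<close> unfolding log_convex_on_def by (intro powr_mono2) auto
  also have "\<dots> = (f x powr \<beta>) powr u * (f y powr \<beta>) powr v"
    by (simp add: powr_mult powr_powr mult.commute)
  also have "\<dots> \<le> u * f x powr \<beta> + v * f y powr \<beta>"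
    using pos uv by (intro Youngs_inequality_0) auto
  finally show "f (u *\<^sub>R x + v *\<^sub>R y) powr \<beta> \<le> u * f x powr \<beta> + v * f y powr \<beta>" .
qed

lemma log_convex_on_cdiv:
  assumes f: "log_convex_on S f" and "b > 0"
  shows "log_convex_on S (\<lambda>x. f x / b)"
  unfolding log_convex_on_def
proof (intro conjI ballI allI impI)
  show "convex S" "\<And>x. x \<in> S \<Longrightarrow> 0 < f x / b"
    using f \<open>b > 0\<close> by (auto simp: log_convex_on_def)
  fix x y and u v :: real
  assume xy: "x \<in> S" "y \<in> S" and uv: "0 \<le> u" "0 \<le> v" "u + v = 1"
  have "b powr u * b powr v = b"
    using \<open>b > 0\<close> uv by (simp flip: powr_add)
  then have "(f x / b) powr u * (f y / b) powr v = f x powr u * f y powr v / b"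
    by (simp add: powr_divide)
  then show "f (u *\<^sub>R x + v *\<^sub>R y) / b \<le> (f x / b) powr u * (f y / b) powr v"
    using f xy uv \<open>b > 0\<close> unfolding log_convex_on_def by (simp add: divide_right_mono)
qed

lemma Holder_inequality_two:
  fixes a b c d u v :: real
  assumes "a > 0" "b > 0" "c > 0" "d > 0" "u \<ge> 0" "v \<ge> 0" "u + v = 1"
  shows "a powr u * b powr v + c powr u * d powr v \<le> (a + c) powr u * (b + d) powr v"
proof -
  define M where "M = (a + c) powr u * (b + d) powr v"
  define p q where "p = a / (a + c)" and "q = b / (b + d)"
  have M: "M > 0" using assms by (simp add: M_def)
  have p': "c / (a + c) = 1 - p" and q': "d / (b + d) = 1 - q"
    using assms by (simp_all add: p_def q_def field_simps)
  have "a powr u * b powr v = M * (p powr u * q powr v)"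
    using assms by (simp add: M_def p_def q_def powr_divide)
  also have "\<dots> \<le> M * (u * p + v * q)"
    using assms M by (intro mult_left_mono Youngs_inequality_0) (auto simp: p_def q_def)
  finally have ab: "a powr u * b powr v \<le> M * (u * p + v * q)" .
  have "c powr u * d powr v = M * ((c / (a + c)) powr u * (d / (b + d)) powr v)"
    using assms by (simp add: M_def powr_divide)
  also have "\<dots> \<le> M * (u * (c / (a + c)) + v * (d / (b + d)))"
    using assms M by (intro mult_left_mono Youngs_inequality_0) auto
  also have "\<dots> = M * (u * (1 - p) + v * (1 - q))"
    by (simp only: p' q')
  finally have cd: "c powr u * d powr v \<le> M * (u * (1 - p) + v * (1 - q))" .
  have "M * (u * p + v * q) + M * (u * (1 - p) + v * (1 - q)) = M * (u + v)"
    by (simp add: algebra_simps)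
  then show ?thesis using add_mono[OF ab cd] assms(7) by (simp add: M_def)
qed

lemma log_convex_on_add:
  assumes f: "log_convex_on S f" and g: "log_convex_on S g"
  shows "log_convex_on S (\<lambda>x. f x + g x)"
  unfolding log_convex_on_def
proof (intro conjI ballI allI impI)
  show "convex S" "\<And>x. x \<in> S \<Longrightarrow> 0 < f x + g x"
    using f g by (auto simp: log_convex_on_def add_pos_pos)
  fix x y and u v :: real
  assume xy: "x \<in> S" "y \<in> S" and uv: "0 \<le> u" "0 \<le> v" "u + v = 1"
  have "f (u *\<^sub>R x + v *\<^sub>R y) + g (u *\<^sub>R x + v *\<^sub>R y)
      \<le> f x powr u * f y powr v + g x powr u * g y powr v"
    using f g xy uv unfolding log_convex_on_def by (intro add_mono) auto
  also have "\<dots> \<le> (f x + g x) powr u * (f y + g y) powr v"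
    using f g xy uv unfolding log_convex_on_def by (intro Holder_inequality_two) auto
  finally show "f (u *\<^sub>R x + v *\<^sub>R y) + g (u *\<^sub>R x + v *\<^sub>R y)
      \<le> (f x + g x) powr u * (f y + g y) powr v" .
qed

lemma log_convex_on_sum:
  assumes "finite I" "I \<noteq> {}" "\<And>i. i \<in> I \<Longrightarrow> log_convex_on S (f i)"
  shows "log_convex_on S (\<lambda>x. \<Sum>i\<in>I. f i x)"
  using assms by (induction I rule: finite_ne_induct) (auto intro: log_convex_on_add)

lemma log_convex_on_exponential:
  fixes S :: "real set"
  assumes "convex S" "c > 0" "m > 0"
  shows "log_convex_on S (\<lambda>t. c * m powr t)"
  unfolding log_convex_on_def
proof (intro conjI ballI allI impI)
  fix t s u v :: real
  assume uv: "0 \<le> u" "0 \<le> v" "u + v = 1"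
  have "c powr u * c powr v = c"
    using \<open>c > 0\<close> uv by (simp flip: powr_add)
  then show "c * m powr (u *\<^sub>R t + v *\<^sub>R s) \<le> (c * m powr t) powr u * (c * m powr s) powr v"
    using assms by (simp add: powr_mult powr_powr powr_add mult.commute mult.left_commute)
qed (use assms in auto)

lemma log_convex_on_if_inverse_concave:
  assumes pos: "\<And>x. x \<in> S \<Longrightarrow> f x > 0" and conc: "concave_on S (\<lambda>x. 1 / f x)"
  shows "log_convex_on S f"
  unfolding log_convex_on_def
proof (intro conjI ballI allI impI pos)
  show "convex S" using conc by (rule concave_on_imp_convex)
  fix x y and u v :: real
  assume xy: "x \<in> S" "y \<in> S" and uv: "0 \<le> u" "0 \<le> v" "u + v = 1"
  have z: "u *\<^sub>R x + v *\<^sub>R y \<in> S"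
    using \<open>convex S\<close> xy uv by (simp add: convex_def)
  have "1 / (f x powr u * f y powr v) = (1 / f x) powr u * (1 / f y) powr v"
    by (simp add: powr_divide)
  also have "\<dots> \<le> u * (1 / f x) + v * (1 / f y)"
    using pos xy uv by (intro Youngs_inequality_0) auto
  also have "\<dots> \<le> 1 / f (u *\<^sub>R x + v *\<^sub>R y)"
    using conc xy uv by (simp add: concave_on_iff)
  finally have inv: "1 / (f x powr u * f y powr v) \<le> 1 / f (u *\<^sub>R x + v *\<^sub>R y)" .
  show "f (u *\<^sub>R x + v *\<^sub>R y) \<le> f x powr u * f y powr v"
  proof (rule inverse_le_imp_le)
    show "inverse (f x powr u * f y powr v) \<le> inverse (f (u *\<^sub>R x + v *\<^sub>R y))"
      using inv by (simp only: inverse_eq_divide)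
    show "0 < f x powr u * f y powr v"
      using pos[OF xy(1)] pos[OF xy(2)] by simp
  qed
qed

lemma convex_on_sum_fun:
  assumes "convex S" "\<And>i. i \<in> I \<Longrightarrow> convex_on S (f i)"
  shows "convex_on S (\<lambda>x. \<Sum>i\<in>I. f i x)"
  unfolding convex_on_def
proof (intro conjI ballI allI impI assms(1))
  fix x y u v assume xy: "x \<in> S" "y \<in> S" and uv: "(0::real) \<le> u" "0 \<le> v" "u + v = 1"
  have "(\<Sum>i\<in>I. f i (u *\<^sub>R x + v *\<^sub>R y)) \<le> (\<Sum>i\<in>I. u * f i x + v * f i y)"
    using assms(2) xy uv by (intro sum_mono) (simp add: convex_on_def)
  also have "\<dots> = u * (\<Sum>i\<in>I. f i x) + v * (\<Sum>i\<in>I. f i y)"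
    by (simp add: sum.distrib sum_distrib_left)
  finally show "(\<Sum>i\<in>I. f i (u *\<^sub>R x + v *\<^sub>R y)) \<le> u * (\<Sum>i\<in>I. f i x) + v * (\<Sum>i\<in>I. f i y)" .
qed

lemma convex_on_sum_powr_log_convex:
  assumes "convex S" "\<And>i. i \<in> I \<Longrightarrow> log_convex_on S (f i)" "b > 0" "\<beta> > 0"
  shows "convex_on S (\<lambda>x. \<Sum>i\<in>I. (f i x / b) powr \<beta>)"
  using assms by (intro convex_on_sum_fun log_convex_on_powr log_convex_on_cdiv) auto

lemma matrix_mul_diag_mat_nth: "(M ** diag_mat l) $ i $ j = M $ i $ j * l j"
  unfolding diag_mat_def matrix_matrix_mult_def
  by (simp add: if_distrib if_distribR sum.delta cong: if_cong)

lemma diag_mat_mul_matrix_nth: "(diag_mat l ** M) $ i $ j = l i * M $ i $ j"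
  unfolding diag_mat_def matrix_matrix_mult_def
  by (simp add: if_distrib if_distribR sum.delta cong: if_cong)

lemma diag_mat_mul_diag_mat: "diag_mat l ** diag_mat m = diag_mat (\<lambda>i. l i * m i)"
  by (simp add: vec_eq_iff diag_mat_mul_matrix_nth) (simp add: diag_mat_def)

lemma diag_mat_one: "diag_mat (\<lambda>i. 1) = mat 1"
  by (simp add: diag_mat_def mat_def)

lemma transpose_diag_mat [simp]: "transpose (diag_mat l) = diag_mat l"
  by (simp add: diag_mat_def transpose_def vec_eq_iff)

lemma diag_mat_mult_vec_nth: "(diag_mat l *v v) $ i = l i * v $ i"
  unfolding diag_mat_def matrix_vector_mult_def
  by (simp add: if_distrib if_distribR sum.delta cong: if_cong)

lemma matrix_inv_eqI:
  fixes A B :: "real^'n^'n"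
  assumes "A ** B = mat 1"
  shows "matrix_inv A = B"
proof -
  have "\<exists>A'. A ** A' = mat 1 \<and> A' ** A = mat 1"
    using assms matrix_left_right_inverse by blast
  then have "matrix_inv A ** A = mat 1"
    unfolding matrix_inv_def by (rule someI2_ex) blast
  then have "matrix_inv A ** (A ** B) = B"
    by (simp add: matrix_mul_assoc)
  then show ?thesis by (simp add: assms)
qed

lemma orthogonal_matrix_mul_transpose: "orthogonal_matrix U \<Longrightarrow> U ** transpose U = mat 1"
  by (simp add: orthogonal_matrix_def)

lemma orthogonal_matrix_transpose_mul: "orthogonal_matrix U \<Longrightarrow> transpose U ** U = mat 1"
  by (simp add: orthogonal_matrix_def)

lemma orthogonal_conj_diag_mult:
  fixes U :: "real^'n^'n"
  assumes "orthogonal_matrix U"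
  shows "(U ** diag_mat l ** transpose U) ** (U ** diag_mat m ** transpose U)
    = U ** diag_mat (\<lambda>i. l i * m i) ** transpose U"
proof -
  have "(U ** diag_mat l ** transpose U) ** (U ** diag_mat m ** transpose U)
      = U ** (diag_mat l ** ((transpose U ** U) ** (diag_mat m ** transpose U)))"
    by (simp only: matrix_mul_assoc)
  also have "\<dots> = U ** ((diag_mat l ** diag_mat m) ** transpose U)"
    using assms by (simp only: orthogonal_matrix_transpose_mul matrix_mul_lid matrix_mul_assoc)
  finally show ?thesis by (simp only: diag_mat_mul_diag_mat matrix_mul_assoc)
qed

lemma orthogonal_conj_diag_one:
  "orthogonal_matrix U \<Longrightarrow> U ** diag_mat (\<lambda>i. 1) ** transpose U = mat 1"
  by (simp add: diag_mat_one orthogonal_matrix_mul_transpose)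

lemma inner_orthogonal_conj_diag:
  fixes U :: "real^'n^'n"
  shows "z \<bullet> ((U ** diag_mat l ** transpose U) *v z) = (\<Sum>j\<in>UNIV. l j * ((transpose U *v z) $ j)^2)"
proof -
  have "z \<bullet> ((U ** diag_mat l ** transpose U) *v z)
      = (transpose U *v z) \<bullet> (diag_mat l *v (transpose U *v z))"
    by (simp add: dot_lmul_matrix flip: matrix_vector_mul_assoc)
  also have "\<dots> = (\<Sum>j\<in>UNIV. l j * ((transpose U *v z) $ j)^2)"
    by (simp add: inner_vec_def diag_mat_mult_vec_nth power2_eq_square mult.commute mult.left_commute)
  finally show ?thesis .
qed

text \<open>The functional calculus is independent of the chosen diagonalization.\<close>
lemma orthogonal_conj_diag_fun_cong:
  fixes U V :: "real^'n^'n"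
  assumes U: "orthogonal_matrix U" and V: "orthogonal_matrix V"
    and eq: "U ** diag_mat l ** transpose U = V ** diag_mat m ** transpose V"
  shows "U ** diag_mat (\<lambda>i. f (l i)) ** transpose U = V ** diag_mat (\<lambda>i. f (m i)) ** transpose V"
proof -
  define W where "W = transpose V ** U"
  have "W ** diag_mat l = transpose V ** U ** diag_mat l ** (transpose U ** U)"
    using U by (simp add: W_def orthogonal_matrix_transpose_mul)
  also have "\<dots> = transpose V ** (U ** diag_mat l ** transpose U) ** U"
    by (simp only: matrix_mul_assoc)
  also have "\<dots> = (transpose V ** V) ** diag_mat m ** W"
    unfolding eq W_def by (simp only: matrix_mul_assoc)
  finally have WD: "W ** diag_mat l = diag_mat m ** W"
    using V by (simp add: orthogonal_matrix_transpose_mul)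
  have "W $ i $ j * f (l j) = f (m i) * W $ i $ j" for i j
  proof -
    have "W $ i $ j * l j = m i * W $ i $ j"
      using WD by (metis diag_mat_mul_matrix_nth matrix_mul_diag_mat_nth)
    then show ?thesis by (cases "W $ i $ j = 0") auto
  qed
  then have WF: "W ** diag_mat (\<lambda>i. f (l i)) = diag_mat (\<lambda>i. f (m i)) ** W"
    by (simp add: vec_eq_iff diag_mat_mul_matrix_nth matrix_mul_diag_mat_nth)
  have UVW: "U = V ** W"
    using V by (simp add: W_def matrix_mul_assoc orthogonal_matrix_mul_transpose)
  have "U ** diag_mat (\<lambda>i. f (l i)) ** transpose U
      = V ** (W ** diag_mat (\<lambda>i. f (l i))) ** transpose W ** transpose V"
    unfolding UVW by (simp only: matrix_transpose_mul matrix_mul_assoc)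
  also have "\<dots> = V ** diag_mat (\<lambda>i. f (m i)) ** (W ** transpose W) ** transpose V"
    unfolding WF by (simp only: matrix_mul_assoc)
  also have "W ** transpose W = transpose V ** (U ** transpose U) ** V"
    unfolding W_def by (simp only: matrix_transpose_mul transpose_transpose matrix_mul_assoc)
  also have "\<dots> = mat 1"
    using U V by (simp add: orthogonal_matrix_mul_transpose orthogonal_matrix_transpose_mul)
  finally show ?thesis by simp
qed

section \<open>The spectral theorem for symmetric matrices\<close>

lemma symmetric_matrix_inner_commute:
  fixes A :: "real^'n^'n"
  assumes "transpose A = A"
  shows "x \<bullet> (A *v y) = (A *v x) \<bullet> y"
  by (metis assms dot_lmul_matrix transpose_matrix_vector)

lemma nonpos_if_quadratic_nonpos:
  fixes K M :: real
  assumes "\<And>s. 2 * s * K + s^2 * M \<le> 0"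
  shows "K \<le> 0"
proof (rule ccontr)
  assume "\<not> K \<le> 0"
  define s where "s = K / (\<bar>M\<bar> + 1)"
  have "s > 0" "s * \<bar>M\<bar> \<le> K"
    using \<open>\<not> K \<le> 0\<close> by (simp_all add: s_def field_simps)
  then have "s * (2 * K + s * M) > 0"
    using \<open>\<not> K \<le> 0\<close> abs_ge_minus_self[of M] mult_left_mono[of "- M" "\<bar>M\<bar>" s]
    by (intro mult_pos_pos) auto
  then show False
    using assms[of s] by (simp add: algebra_simps power2_eq_square)
qed

text \<open>A maximiser of the Rayleigh quotient on an invariant subspace is an eigenvector:
  perturbing it along the residual \<open>A v - \<lambda> v\<close> would otherwise increase the quotient.\<close>
lemma rayleigh_maximiser_eigenvector:
  fixes A :: "real^'n^'n"
  assumes sym: "transpose A = A" and W: "subspace W" and AW: "\<And>w. w \<in> W \<Longrightarrow> A *v w \<in> W"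
    and v: "v \<in> W" "v \<bullet> v = 1"
    and max: "\<And>w. w \<in> W \<Longrightarrow> w \<bullet> (A *v w) \<le> (v \<bullet> (A *v v)) * (w \<bullet> w)"
  shows "A *v v = (v \<bullet> (A *v v)) *\<^sub>R v"
proof -
  define lam where "lam = v \<bullet> (A *v v)"
  define w where "w = A *v v - lam *\<^sub>R v"
  have wW: "w \<in> W"
    unfolding w_def using W AW v by (simp add: subspace_diff subspace_scale)
  have wv: "w \<bullet> v = 0"
    unfolding w_def lam_def
    using v(2) by (simp add: inner_diff_left inner_commute[of "A *v v" v])
  have wAv: "w \<bullet> (A *v v) = w \<bullet> w"
    using wv by (simp add: w_def inner_diff_right)
  have "2 * s * (w \<bullet> w) + s^2 * (w \<bullet> (A *v w) - lam * (w \<bullet> w)) \<le> 0" for s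
  proof -
    have "v + s *\<^sub>R w \<in> W" using W v wW by (simp add: subspace_add subspace_scale)
    moreover have "(v + s *\<^sub>R w) \<bullet> (A *v (v + s *\<^sub>R w))
        = lam + 2 * s * (w \<bullet> (A *v v)) + s^2 * (w \<bullet> (A *v w))"
      unfolding lam_def
      by (simp add: matrix_vector_right_distrib matrix_vector_mult_scaleR inner_add_left inner_add_right
          power2_eq_square algebra_simps symmetric_matrix_inner_commute[OF sym, of v w] inner_commute)
    moreover have "(v + s *\<^sub>R w) \<bullet> (v + s *\<^sub>R w) = 1 + s^2 * (w \<bullet> w)"
      using wv v(2) by (simp add: inner_add_left inner_add_right inner_commute power2_eq_square)
    ultimately show ?thesis
      using max[of "v + s *\<^sub>R w"] wAv by (simp add: lam_def algebra_simps)
  qed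
  then have "w \<bullet> w \<le> 0" by (rule nonpos_if_quadratic_nonpos)
  then have "w = 0" by (meson inner_gt_zero_iff not_le)
  then show ?thesis by (simp add: w_def lam_def)
qed

lemma exists_rayleigh_maximiser:
  fixes A :: "real^'n^'n"
  assumes W: "subspace W" and "W \<noteq> {0}"
  obtains v where "v \<in> W" "v \<bullet> v = 1" "\<And>w. w \<in> W \<Longrightarrow> w \<bullet> (A *v w) \<le> (v \<bullet> (A *v v)) * (w \<bullet> w)"
proof -
  define K where "K = W \<inter> sphere 0 1"
  have "compact K"
    unfolding K_def using closed_subspace[OF W] by (simp add: closed_Int_compact)
  obtain x0 where "x0 \<in> W" "x0 \<noteq> 0" using \<open>W \<noteq> {0}\<close> subspace_0[OF W] by blast
  then have "(1 / norm x0) *\<^sub>R x0 \<in> K"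
    using W by (simp add: K_def subspace_scale)
  then have "K \<noteq> {}" by blast
  moreover have "continuous_on K (\<lambda>w. w \<bullet> (A *v w))"
    by (intro continuous_intros)
  ultimately obtain v where vK: "v \<in> K" and vmax: "\<And>y. y \<in> K \<Longrightarrow> y \<bullet> (A *v y) \<le> v \<bullet> (A *v v)"
    using continuous_attains_sup[OF \<open>compact K\<close>] by blast
  have "w \<bullet> (A *v w) \<le> (v \<bullet> (A *v v)) * (w \<bullet> w)" if "w \<in> W" for w
  proof (cases "w = 0")
    case False
    have "(1 / norm w) *\<^sub>R w \<in> K"
      using that False W by (simp add: K_def subspace_scale)
    then have "(1 / norm w)^2 * (w \<bullet> (A *v w)) \<le> v \<bullet> (A *v v)"
      using vmax[of "(1 / norm w) *\<^sub>R w"] by (simp add: matrix_vector_mult_scaleR power2_eq_square)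
    then show ?thesis
      using False by (simp add: field_simps power2_eq_square dot_square_norm)
  qed simp
  moreover have "v \<in> W" "v \<bullet> v = 1"
    using vK by (auto simp: K_def dot_square_norm)
  ultimately show ?thesis using that by blast
qed

lemma exists_eigenvector_orthogonal:
  fixes A :: "real^'n^'n"
  assumes sym: "transpose A = A" and S: "finite S" "card S < CARD('n)"
    and eig: "\<And>s. s \<in> S \<Longrightarrow> \<exists>\<mu>. A *v s = \<mu> *\<^sub>R s"
  obtains v where "v \<bullet> v = 1" "\<And>s. s \<in> S \<Longrightarrow> s \<bullet> v = 0" "\<exists>\<mu>. A *v v = \<mu> *\<^sub>R v"
proof -
  define W where "W = {w. \<forall>s\<in>S. orthogonal s w}"
  have W: "subspace W" unfolding W_def by (rule subspace_orthogonal_to_vectors)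
  have AW: "A *v w \<in> W" if "w \<in> W" for w
    unfolding W_def
  proof (intro CollectI ballI)
    fix s assume "s \<in> S"
    then obtain \<mu> where "A *v s = \<mu> *\<^sub>R s" using eig by blast
    then have "s \<bullet> (A *v w) = \<mu> * (s \<bullet> w)"
      by (simp add: symmetric_matrix_inner_commute[OF sym])
    then show "orthogonal s (A *v w)"
      using that \<open>s \<in> S\<close> by (simp add: W_def orthogonal_def)
  qed
  have "dim S < DIM(real^'n)"
    using dim_le_card[of S S] S by (simp add: span_base subsetI)
  then obtain x0 where "x0 \<noteq> 0" "\<And>y. y \<in> span S \<Longrightarrow> orthogonal x0 y"
    using orthogonal_to_subspace_exists by metis
  then have "x0 \<in> W" "x0 \<noteq> 0"
    by (auto simp: W_def orthogonal_def span_base inner_commute)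
  then obtain v where vW: "v \<in> W" and vv: "v \<bullet> v = 1"
    and vmax: "\<And>w. w \<in> W \<Longrightarrow> w \<bullet> (A *v w) \<le> (v \<bullet> (A *v v)) * (w \<bullet> w)"
    using exists_rayleigh_maximiser[OF W, of A] by blast
  then have "A *v v = (v \<bullet> (A *v v)) *\<^sub>R v"
    using rayleigh_maximiser_eigenvector[OF sym W AW] by blast
  then show ?thesis
    using that vv vW by (auto simp: W_def orthogonal_def)
qed

lemma exists_orthonormal_eigenvectors:
  fixes A :: "real^'n^'n"
  assumes sym: "transpose A = A" and "k \<le> CARD('n)"
  shows "\<exists>S. finite S \<and> card S = k \<and> (\<forall>s\<in>S. norm s = 1 \<and> (\<exists>\<mu>. A *v s = \<mu> *\<^sub>R s))
           \<and> (\<forall>s\<in>S. \<forall>t\<in>S. s \<noteq> t \<longrightarrow> s \<bullet> t = 0)"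
  using \<open>k \<le> CARD('n)\<close>
proof (induction k)
  case 0
  show ?case by (rule exI[of _ "{}"]) simp
next
  case (Suc k)
  then obtain S where S: "finite S" "card S = k" "\<forall>s\<in>S. norm s = 1 \<and> (\<exists>\<mu>. A *v s = \<mu> *\<^sub>R s)"
    "\<forall>s\<in>S. \<forall>t\<in>S. s \<noteq> t \<longrightarrow> s \<bullet> t = 0" by auto
  obtain v where v: "v \<bullet> v = 1" "\<And>s. s \<in> S \<Longrightarrow> s \<bullet> v = 0" "\<exists>\<mu>. A *v v = \<mu> *\<^sub>R v"
    using exists_eigenvector_orthogonal[OF sym S(1)] S Suc.prems by auto
  have "v \<notin> S" using v(1,2) by force
  then show ?case
    using S v by (intro exI[of _ "insert v S"]) (auto simp: inner_commute norm_eq_1)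
qed

lemma orthonormal_eigenvectors_diagonalize:
  fixes A :: "real^'n^'n" and f :: "'n \<Rightarrow> real^'n"
  assumes fn: "\<And>i. norm (f i) = 1" and fo: "\<And>i j. i \<noteq> j \<Longrightarrow> f i \<bullet> f j = 0"
    and fe: "\<And>j. A *v f j = l j *\<^sub>R f j"
  defines "U \<equiv> \<chi> i j. f j $ i"
  shows "orthogonal_matrix U" "A = U ** diag_mat l ** transpose U"
proof -
  have colU: "column j U = f j" for j by (simp add: U_def column_def vec_eq_iff)
  show U: "orthogonal_matrix U"
    by (simp add: orthogonal_matrix_orthonormal_columns colU fn fo orthogonal_def)
  have "(A ** U) $ i $ j = (U ** diag_mat l) $ i $ j" for i j
  proof -
    have "(A ** U) $ i $ j = (A *v column j U) $ i"
      by (simp add: matrix_matrix_mult_def matrix_vector_mult_def column_def)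
    also have "\<dots> = l j * f j $ i"
      by (simp add: colU fe)
    also have "\<dots> = (U ** diag_mat l) $ i $ j"
      by (simp add: matrix_mul_diag_mat_nth U_def)
    finally show ?thesis .
  qed
  then have "A ** U = U ** diag_mat l"
    by (simp add: vec_eq_iff)
  then have "A ** U ** transpose U = U ** diag_mat l ** transpose U"
    by simp
  then show "A = U ** diag_mat l ** transpose U"
    using U by (simp add: orthogonal_matrix_mul_transpose flip: matrix_mul_assoc)
qed

theorem symmetric_matrix_diagonalization:
  fixes A :: "real^'n^'n"
  assumes sym: "transpose A = A"
  obtains U l where "orthogonal_matrix U" "A = U ** diag_mat l ** transpose U"
proof -
  obtain S where S: "finite S" "card S = CARD('n)" "\<forall>s\<in>S. norm s = 1 \<and> (\<exists>\<mu>. A *v s = \<mu> *\<^sub>R s)"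
    "\<forall>s\<in>S. \<forall>t\<in>S. s \<noteq> t \<longrightarrow> s \<bullet> t = 0"
    using exists_orthonormal_eigenvectors[OF sym, of "CARD('n)"] by auto
  obtain f where f: "bij_betw f (UNIV::'n set) S"
    using bij_betw_iff_card[of "UNIV::'n set" S] S by auto
  have fS: "f i \<in> S" for i using f by (auto simp: bij_betw_def)
  have fn: "norm (f i) = 1" for i using S fS by blast
  have fo: "f i \<bullet> f j = 0" if "i \<noteq> j" for i j
    using S(4) fS f that by (metis bij_betw_def inj_def)
  have fe: "A *v f j = (f j \<bullet> (A *v f j)) *\<^sub>R f j" for j
  proof -
    obtain \<mu> where "A *v f j = \<mu> *\<^sub>R f j" using S fS by blast
    moreover have "f j \<bullet> f j = 1" using fn[of j] by (simp add: dot_square_norm)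
    ultimately show ?thesis by simp
  qed
  show ?thesis
    using orthonormal_eigenvectors_diagonalize[where f = f, OF fn fo fe] that by blast
qed

section \<open>Symmetric positive definite matrices and their powers\<close>

lemma spd_symmetric: "spd A \<Longrightarrow> transpose A = A"
  by (simp add: spd_def)

lemma spd_orthogonal_conj_diag:
  fixes U :: "real^'n^'n"
  assumes U: "orthogonal_matrix U" and l: "\<And>i. l i > 0"
  shows "spd (U ** diag_mat l ** transpose U)"
  unfolding spd_def
proof (intro conjI allI impI)
  show "transpose (U ** diag_mat l ** transpose U) = U ** diag_mat l ** transpose U"
    by (simp add: matrix_transpose_mul matrix_mul_assoc)
  fix v :: "real^'n" assume "v \<noteq> 0"
  have "U *v (transpose U *v v) = v"
    using U by (simp only: matrix_vector_mul_assoc orthogonal_matrix_mul_transpose matrix_vector_mul_lid)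
  then obtain j where j: "(transpose U *v v) $ j \<noteq> 0"
    using \<open>v \<noteq> 0\<close> by (metis matrix_vector_mult_0_right vec_eq_iff zero_index)
  have "0 < (\<Sum>j\<in>UNIV. l j * ((transpose U *v v) $ j)^2)"
    using l j by (intro sum_pos2[of UNIV j]) (auto simp: less_imp_le)
  then show "v \<bullet> ((U ** diag_mat l ** transpose U) *v v) > 0"
    by (simp only: inner_orthogonal_conj_diag)
qed

lemma spd_diagonalization:
  fixes A :: "real^'n^'n"
  assumes "spd A"
  obtains U l where "orthogonal_matrix U" "\<And>i. l i > 0" "A = U ** diag_mat l ** transpose U"
proof -
  obtain U l where U: "orthogonal_matrix U" and A: "A = U ** diag_mat l ** transpose U"
    using symmetric_matrix_diagonalization[OF spd_symmetric[OF assms]] by blast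
  have "l i > 0" for i
  proof -
    define e where "e = U *v axis i (1::real)"
    have Ue: "transpose U *v e = axis i 1"
      using U unfolding e_def
      by (simp only: matrix_vector_mul_assoc orthogonal_matrix_transpose_mul matrix_vector_mul_lid)
    then have "e \<noteq> 0" by auto
    then have "0 < e \<bullet> (A *v e)"
      using assms by (simp add: spd_def)
    also have "\<dots> = (\<Sum>j\<in>UNIV. l j * (axis i 1 $ j)^2)"
      unfolding A inner_orthogonal_conj_diag Ue ..
    also have "\<dots> = (\<Sum>j\<in>UNIV. if j = i then l j else 0)"
      by (intro sum.cong) (auto simp: axis_def)
    also have "\<dots> = l i" by simp
    finally show ?thesis .
  qed
  then show ?thesis using that U A by blast
qed

lemma mpow_orthogonal_conj_diag:
  fixes U :: "real^'n^'n"
  assumes U: "orthogonal_matrix U" and l: "\<And>i. l i > 0" and A: "A = U ** diag_mat l ** transpose U"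
  shows "mpow A t = U ** diag_mat (\<lambda>i. l i powr t) ** transpose U"
proof -
  let ?P = "\<lambda>B. \<exists>U l. orthogonal_matrix U \<and> (\<forall>i. l i > 0) \<and>
      A = U ** diag_mat l ** transpose U \<and> B = U ** diag_mat (\<lambda>i. l i powr t) ** transpose U"
  have "?P (U ** diag_mat (\<lambda>i. l i powr t) ** transpose U)" using U l A by blast
  then have "?P (mpow A t)" unfolding mpow_def by (rule someI)
  then obtain U' l' where U': "orthogonal_matrix U'" and A': "A = U' ** diag_mat l' ** transpose U'"
    and B: "mpow A t = U' ** diag_mat (\<lambda>i. l' i powr t) ** transpose U'" by blast
  show ?thesis
    unfolding B using orthogonal_conj_diag_fun_cong[OF U' U, of l' l "\<lambda>x. x powr t"] A A' by simp
qed

lemma matrix_inv_orthogonal_conj_diag: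
  fixes U :: "real^'n^'n"
  assumes U: "orthogonal_matrix U" and l: "\<And>i. l i \<noteq> 0"
  shows "matrix_inv (U ** diag_mat l ** transpose U) = U ** diag_mat (\<lambda>i. 1 / l i) ** transpose U"
  using l by (intro matrix_inv_eqI) (simp add: orthogonal_conj_diag_mult[OF U] orthogonal_conj_diag_one[OF U])

lemma spd_matrix_inv:
  fixes S :: "real^'n^'n"
  assumes "spd S"
  shows "S ** matrix_inv S = mat 1" "spd (matrix_inv S)"
proof -
  obtain U l where U: "orthogonal_matrix U" and l: "\<And>i. l i > 0" and S: "S = U ** diag_mat l ** transpose U"
    using spd_diagonalization[OF assms] by blast
  have l0: "l i \<noteq> 0" for i using l[of i] by simp
  have inv: "matrix_inv S = U ** diag_mat (\<lambda>i. 1 / l i) ** transpose U"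
    unfolding S using matrix_inv_orthogonal_conj_diag[OF U l0] .
  show "S ** matrix_inv S = mat 1"
    unfolding inv using l0 by (simp add: S orthogonal_conj_diag_mult[OF U] orthogonal_conj_diag_one[OF U])
  show "spd (matrix_inv S)"
    unfolding inv using U l by (intro spd_orthogonal_conj_diag) auto
qed

lemma spd_mpow:
  assumes "spd A"
  shows "spd (mpow A t)"
proof -
  obtain U l where U: "orthogonal_matrix U" and l: "\<And>i. l i > 0" and A: "A = U ** diag_mat l ** transpose U"
    using spd_diagonalization[OF assms] by blast
  show ?thesis
    unfolding mpow_orthogonal_conj_diag[OF U l A]
    by (intro spd_orthogonal_conj_diag[OF U]) (metis l powr_gt_zero less_irrefl)
qed

lemma mpow_add:
  assumes "spd A"
  shows "mpow A s ** mpow A t = mpow A (s + t)"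
proof -
  obtain U l where U: "orthogonal_matrix U" and l: "\<And>i. l i > 0" and A: "A = U ** diag_mat l ** transpose U"
    using spd_diagonalization[OF assms] by blast
  show ?thesis
    using l by (simp add: mpow_orthogonal_conj_diag[OF U l A] orthogonal_conj_diag_mult[OF U] powr_add)
qed

lemma mpow_0:
  assumes "spd A"
  shows "mpow A 0 = mat 1"
proof -
  obtain U l where U: "orthogonal_matrix U" and l: "\<And>i. l i > 0" and A: "A = U ** diag_mat l ** transpose U"
    using spd_diagonalization[OF assms] by blast
  have "l i \<noteq> 0" for i using l[of i] by simp
  then show ?thesis
    by (simp add: mpow_orthogonal_conj_diag[OF U l A] orthogonal_conj_diag_one[OF U])
qed

lemma spd_congruence:
  fixes B Q :: "real^'n^'n"
  assumes B: "spd B" and Q: "spd Q"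
  shows "spd (Q ** B ** Q)"
  unfolding spd_def
proof (intro conjI allI impI)
  show "transpose (Q ** B ** Q) = Q ** B ** Q"
    using B Q by (simp add: matrix_transpose_mul matrix_mul_assoc spd_def)
  fix w :: "real^'n" assume "w \<noteq> 0"
  then have "Q *v w \<noteq> 0"
    using Q by (auto simp: spd_def)
  moreover have "w \<bullet> ((Q ** B ** Q) *v w) = (Q *v w) \<bullet> (B *v (Q *v w))"
    by (simp add: symmetric_matrix_inner_commute[OF spd_symmetric[OF Q]] flip: matrix_vector_mul_assoc)
  ultimately show "w \<bullet> ((Q ** B ** Q) *v w) > 0"
    using B by (simp add: spd_def)
qed

section \<open>Euclidean log-convexity of the quadratic form of the inverse\<close>

lemma convex_PD: "convex PD"
  unfolding convex_def PD_def
proof (intro ballI allI impI CollectI)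
  fix A B :: "real^'n^'n" and u v :: real
  assume "A \<in> {A. spd A}" "B \<in> {A. spd A}" and uv: "0 \<le> u" "0 \<le> v" "u + v = 1"
  then have A: "spd A" and B: "spd B" by auto
  show "spd (u *\<^sub>R A + v *\<^sub>R B)"
    unfolding spd_def
  proof (intro conjI allI impI)
    show "transpose (u *\<^sub>R A + v *\<^sub>R B) = u *\<^sub>R A + v *\<^sub>R B"
      using A B by (simp add: transpose_def vec_eq_iff spd_def)
    fix w :: "real^'n" assume "w \<noteq> 0"
    then have "w \<bullet> (A *v w) > 0" "w \<bullet> (B *v w) > 0"
      using A B by (auto simp: spd_def)
    then have "u * (w \<bullet> (A *v w)) + v * (w \<bullet> (B *v w)) > 0"
      using uv by (cases "u = 0") (auto intro: add_pos_nonneg)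
    then show "w \<bullet> ((u *\<^sub>R A + v *\<^sub>R B) *v w) > 0"
      by (simp add: matrix_vector_mult_add_rdistrib inner_add_right flip: scaleR_matrix_vector_assoc)
  qed
qed

lemma spd_Cauchy_Schwarz:
  fixes S :: "real^'n^'n"
  assumes "spd S"
  shows "(p \<bullet> (S *v q))^2 \<le> (p \<bullet> (S *v p)) * (q \<bullet> (S *v q))"
proof (cases "q = 0")
  case False
  define a c d where "a = p \<bullet> (S *v p)" and "c = p \<bullet> (S *v q)" and "d = q \<bullet> (S *v q)"
  have d: "d > 0" using assms False by (simp add: spd_def d_def)
  have qp: "q \<bullet> (S *v p) = c"
    unfolding c_def by (metis symmetric_matrix_inner_commute[OF spd_symmetric[OF assms]] inner_commute)
  have "(p + s *\<^sub>R q) \<bullet> (S *v (p + s *\<^sub>R q)) = a + 2 * s * c + s^2 * d" for s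
    unfolding a_def d_def c_def[symmetric] using qp
    by (simp add: matrix_vector_right_distrib matrix_vector_mult_scaleR inner_add_left inner_add_right
        power2_eq_square algebra_simps c_def)
  moreover have "(p + s *\<^sub>R q) \<bullet> (S *v (p + s *\<^sub>R q)) \<ge> 0" for s
    using assms by (cases "p + s *\<^sub>R q = 0") (auto simp: spd_def less_imp_le)
  ultimately have "0 \<le> a + 2 * (- c / d) * c + (- c / d)^2 * d" by metis
  also have "\<dots> = a - c^2 / d" using d by (simp add: field_simps power2_eq_square)
  finally show ?thesis using d by (simp add: a_def c_def d_def field_simps)
qed simp

lemma quad_inv_pos:
  fixes S :: "real^'n^'n"
  assumes "spd S" "x \<noteq> 0"
  shows "x \<bullet> (matrix_inv S *v x) > 0"
  using spd_matrix_inv(2)[OF assms(1)] assms(2) by (simp add: spd_def)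

text \<open>Cauchy--Schwarz for the inner product given by \<open>T\<close>, applied to \<open>T\<inverse> x\<close> and \<open>S\<inverse> x\<close>.\<close>
lemma quad_inv_sq_le:
  fixes S T :: "real^'n^'n" and x :: "real^'n"
  assumes S: "spd S" and T: "spd T"
  defines "p \<equiv> matrix_inv S *v x"
  shows "(x \<bullet> p)^2 \<le> (x \<bullet> (matrix_inv T *v x)) * (p \<bullet> (T *v p))"
proof -
  define q where "q = matrix_inv T *v x"
  have Tq: "T *v q = x" and Sp: "S *v p = x"
    using spd_matrix_inv(1)[OF T] spd_matrix_inv(1)[OF S]
    by (simp_all add: q_def p_def matrix_vector_mul_assoc)
  have "q \<bullet> (T *v p) = x \<bullet> p"
    using symmetric_matrix_inner_commute[OF spd_symmetric[OF T]] Tq by simp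
  moreover have "q \<bullet> (T *v q) = x \<bullet> q"
    using Tq by (simp add: inner_commute)
  ultimately show ?thesis
    using spd_Cauchy_Schwarz[OF T, of q p] by (simp add: q_def)
qed

lemma concave_on_PD_inverse_quad_inv:
  fixes x :: "real^'n"
  assumes "x \<noteq> 0"
  shows "concave_on PD (\<lambda>S::real^'n^'n. 1 / (x \<bullet> (matrix_inv S *v x)))"
  unfolding concave_on_iff
proof (intro conjI ballI allI impI convex_PD)
  fix S1 S2 :: "real^'n^'n" and u v :: real
  assume "S1 \<in> PD" "S2 \<in> PD" and uv: "0 \<le> u" "0 \<le> v" "u + v = 1"
  define S where "S = u *\<^sub>R S1 + v *\<^sub>R S2"
  have "S \<in> PD" unfolding S_def using convexD[OF convex_PD] \<open>S1 \<in> PD\<close> \<open>S2 \<in> PD\<close> uv by blast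
  then have s: "spd S" and s1: "spd S1" and s2: "spd S2"
    using \<open>S1 \<in> PD\<close> \<open>S2 \<in> PD\<close> by (auto simp: PD_def)
  define h where "h = (\<lambda>T::real^'n^'n. x \<bullet> (matrix_inv T *v x))"
  define p where "p = matrix_inv S *v x"
  have h0: "h S > 0" "h S1 > 0" "h S2 > 0"
    using quad_inv_pos assms s s1 s2 by (auto simp: h_def)
  have hS: "h S = x \<bullet> p" by (simp add: h_def p_def)
  have k1: "(h S)^2 / h S1 \<le> p \<bullet> (S1 *v p)" and k2: "(h S)^2 / h S2 \<le> p \<bullet> (S2 *v p)"
    using quad_inv_sq_le[OF s s1, of x] quad_inv_sq_le[OF s s2, of x] h0
    by (simp_all add: hS p_def h_def divide_le_eq mult.commute)
  have "x \<bullet> p = p \<bullet> (S *v p)"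
    using spd_matrix_inv(1)[OF s] by (simp add: p_def matrix_vector_mul_assoc inner_commute)
  also have "\<dots> = u * (p \<bullet> (S1 *v p)) + v * (p \<bullet> (S2 *v p))"
    by (simp add: S_def matrix_vector_mult_add_rdistrib inner_add_right flip: scaleR_matrix_vector_assoc)
  finally have "u * ((h S)^2 / h S1) + v * ((h S)^2 / h S2) \<le> h S"
    using k1 k2 uv hS by (smt (verit) mult_left_mono)
  then have "h S * (h S * (u / h S1 + v / h S2)) \<le> h S * 1"
    by (simp add: power2_eq_square algebra_simps)
  then have "h S * (u / h S1 + v / h S2) \<le> 1"
    using h0 by (simp only: mult_le_cancel_left_pos)
  then show "u * (1 / h S1) + v * (1 / h S2) \<le> 1 / h S"
    using h0 by (simp add: le_divide_eq mult.commute)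
qed

lemma log_convex_on_PD_quad_inv:
  fixes x :: "real^'n"
  assumes "x \<noteq> 0"
  shows "log_convex_on PD (\<lambda>S::real^'n^'n. x \<bullet> (matrix_inv S *v x))"
  using quad_inv_pos[OF _ assms] concave_on_PD_inverse_quad_inv[OF assms]
  by (intro log_convex_on_if_inverse_concave) (auto simp: PD_def)

section \<open>Geodesic log-convexity of the quadratic form of the inverse\<close>

lemma matrix_inv_geod:
  fixes A B :: "real^'n^'n"
  assumes A: "spd A" and B: "spd B"
  defines "Q \<equiv> mpow A (-1/2)"
  shows "matrix_inv (geod A B t) = Q ** mpow (Q ** B ** Q) (- t) ** Q"
proof -
  define P C where "P = mpow A (1/2)" and "C = Q ** B ** Q"
  have PQ: "P ** Q = mat 1"
    using mpow_add[OF A, of "1/2" "-1/2"] mpow_0[OF A] by (simp add: P_def Q_def)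
  have C: "spd C"
    unfolding C_def Q_def using B spd_mpow[OF A] by (rule spd_congruence)
  have "mpow C t ** mpow C (- t) = mat 1"
    using mpow_add[OF C] mpow_0[OF C] by simp
  moreover have "(P ** mpow C t ** P) ** (Q ** mpow C (- t) ** Q)
      = P ** (mpow C t ** ((P ** Q) ** mpow C (- t))) ** Q"
    by (simp only: matrix_mul_assoc)
  ultimately have "(P ** mpow C t ** P) ** (Q ** mpow C (- t) ** Q) = mat 1"
    using PQ by (simp add: matrix_mul_assoc)
  then show ?thesis
    unfolding geod_def by (intro matrix_inv_eqI) (simp add: P_def Q_def C_def)
qed

text \<open>With \<open>A\<^sup>-\<^sup>1\<^sup>/\<^sup>2 B A\<^sup>-\<^sup>1\<^sup>/\<^sup>2 = V diag(m) V\<^sup>T\<close>, the witness is \<open>W = V\<^sup>T A\<^sup>-\<^sup>1\<^sup>/\<^sup>2\<close>.\<close>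
lemma quad_inv_geod_eq_sum:
  fixes A B :: "real^'n^'n"
  assumes A: "spd A" and B: "spd B"
  obtains W :: "real^'n^'n" and m :: "'n \<Rightarrow> real"
  where "\<And>j. m j > 0" "\<And>y. y \<noteq> 0 \<Longrightarrow> W *v y \<noteq> 0"
    "\<And>t y. y \<bullet> (matrix_inv (geod A B t) *v y) = (\<Sum>j\<in>UNIV. ((W *v y) $ j)^2 * m j powr (- t))"
proof -
  define Q where "Q = mpow A (-1/2)"
  have Q: "spd Q" unfolding Q_def using A by (rule spd_mpow)
  obtain V m where V: "orthogonal_matrix V" and m: "\<And>i. m i > 0"
    and C: "Q ** B ** Q = V ** diag_mat m ** transpose V"
    using spd_diagonalization[OF spd_congruence[OF B Q]] by blast
  define W where "W = transpose V ** Q"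
  have "W *v y \<noteq> 0" if "y \<noteq> 0" for y
  proof
    assume "W *v y = 0"
    have "Q *v y = V *v (W *v y)"
      using V by (simp only: W_def matrix_vector_mul_assoc matrix_mul_assoc
          orthogonal_matrix_mul_transpose matrix_mul_lid)
    then have "Q *v y = 0" using \<open>W *v y = 0\<close> by simp
    then show False using Q that by (auto simp: spd_def)
  qed
  moreover have "y \<bullet> (matrix_inv (geod A B t) *v y) = (\<Sum>j\<in>UNIV. ((W *v y) $ j)^2 * m j powr (- t))"
    for t y
  proof -
    have "y \<bullet> (matrix_inv (geod A B t) *v y) = (Q *v y) \<bullet> (mpow (Q ** B ** Q) (- t) *v (Q *v y))"
      unfolding matrix_inv_geod[OF A B] Q_def[symmetric]
      by (simp add: symmetric_matrix_inner_commute[OF spd_symmetric[OF Q]] flip: matrix_vector_mul_assoc)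
    also have "\<dots> = (\<Sum>j\<in>UNIV. m j powr (- t) * ((transpose V *v (Q *v y)) $ j)^2)"
      unfolding mpow_orthogonal_conj_diag[OF V m C] by (rule inner_orthogonal_conj_diag)
    also have "\<dots> = (\<Sum>j\<in>UNIV. m j powr (- t) * ((W *v y) $ j)^2)"
      by (simp only: W_def matrix_vector_mul_assoc)
    finally show ?thesis by (simp add: mult.commute)
  qed
  ultimately show ?thesis using that m by blast
qed

lemma log_convex_on_quad_inv_geod:
  fixes A B :: "real^'n^'n" and S :: "real set"
  assumes A: "spd A" and B: "spd B" and "y \<noteq> 0" "convex S"
  shows "log_convex_on S (\<lambda>t. y \<bullet> (matrix_inv (geod A B t) *v y))"
proof -
  obtain W and m :: "'n \<Rightarrow> real" where m: "\<And>j. m j > 0" and W: "W *v y \<noteq> 0"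
    and eq: "\<And>t. y \<bullet> (matrix_inv (geod A B t) *v y) = (\<Sum>j\<in>UNIV. ((W *v y) $ j)^2 * m j powr (- t))"
    using quad_inv_geod_eq_sum[OF A B] \<open>y \<noteq> 0\<close> by metis
  \<comment> \<open>Zero coefficients are dropped: log-convex functions are positive.\<close>
  define J where "J = {j. (W *v y) $ j \<noteq> 0}"
  have "J \<noteq> {}" using W by (auto simp: J_def vec_eq_iff)
  have "y \<bullet> (matrix_inv (geod A B t) *v y) = (\<Sum>j\<in>J. ((W *v y) $ j)^2 * (1 / m j) powr t)" for t
    unfolding eq using m by (intro sum.mono_neutral_cong_right) (auto simp: J_def powr_minus_divide powr_divide)
  moreover have "log_convex_on S (\<lambda>t. \<Sum>j\<in>J. ((W *v y) $ j)^2 * (1 / m j) powr t)"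
    using \<open>J \<noteq> {}\<close> \<open>convex S\<close> m
    by (intro log_convex_on_sum log_convex_on_exponential) (auto simp: J_def)
  ultimately show ?thesis by simp
qed

theorem mainTheorem6:
  fixes x :: "nat \<Rightarrow> real^'d" and n :: nat and \<beta> b :: real
  assumes "\<forall>i\<in>{1..n}. x i \<noteq> 0"
    and "\<beta> > 0" and "b > 0"
  defines "g \<equiv> (\<lambda>\<Sigma>::real^'d^'d. \<Sum>i=1..n. ((x i \<bullet> (matrix_inv \<Sigma> *v x i)) / b) powr \<beta>)"
  shows "convex_on PD g \<and> geodesically_convex g"
proof
  show "convex_on PD g"
    unfolding g_def using assms convex_PD
    by (intro convex_on_sum_powr_log_convex log_convex_on_PD_quad_inv) auto
  show "geodesically_convex g"
    unfolding geodesically_convex_def g_def using assms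
    by (intro allI impI convex_on_sum_powr_log_convex log_convex_on_quad_inv_geod) auto
qed

end
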